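(* Let $p$ be an odd prime and let $q\in\mathbb C_p$ with $|1-q|_p<p^{-1/(p-1)}$. For every $n\in\mathbb Z_+=\{0,1,2,\dots\}$, $$E_{n,q}=\sum_{k=0}^n\sum_{m=0}^k\sum_{l=m}^k q^{\binom k2}s_{2,q}(n,k)\,(q-1)^{m-k}\binom kl_q q^{\binom l2+l(1-k)}\binom lm(-1)^{l+k}E_{m,q}.$$
   Context: $\mathbb Z_p,\mathbb C_p$ denote the $p$-adic integers and the completion of an algebraic closure of $\mathbb Q_p$; $|\cdot|_p$ is normalized by $|p|_p=p^{-1}$. For $x\in\mathbb Z_p$, $[x]_q=\frac{1-q^x}{1-q}$. The fermionic $p$-adic integral of a uniformly differentiable $f:\mathbb Z_p\to\mathbb C_p$ is $\int_{\mathbb Z_p}f(x)\,d\mu_{-1}(x)=\lim_{N\to\infty}\sum_{x=0}^{p^N-1}f(x)(-1)^x$. The $q$-Euler numbers are $E_{n,q}=\int_{\mathbb Z_p}[x]_q^n\,d\mu_{-1}(x)$ (equivalently $E_{n,q}=\frac{2}{(1-q)^n}\sum_{l=0}^n\binom nl(-1)^l\frac{1}{1+q^l}$). $[n]_q!=[n]_q[n-1]_q\cdots[1]_q$ ($[0]_q!=1$) and $\binom kl_q=\frac{[k]_q!}{[l]_q![k-l]_q!}$; $\binom lm$ is the ordinary binomial coefficient. The $q$-Stirling numbers of the second kind $s_{2,q}(n,k)$ are the coefficients in the identity $[x]_q^n=\sum_{k=0}^n q^{\binom k2}s_{2,q}(n,k)\,[x]_q[x-1]_q\cdots[x-k+1]_q$,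 viewed as an identity of polynomials in $[x]_q$ (using $[x-i]_q=q^{-i}([x]_q-[i]_q)$). *)

theory Defs
  imports Complex_Main "HOL-Computational_Algebra.Polynomial"
begin

text \<open>Abstract model of C_p: a field of characteristic 0 with a non-archimedean
absolute value N normalised by N p = 1/p, complete and algebraically closed.
C_p is such a field; the theorem is stated for every such field.\<close>

definition Cp_like :: "nat \<Rightarrow> ('a::field_char_0 \<Rightarrow> real) \<Rightarrow> bool" where
  "Cp_like p N \<longleftrightarrow>
     (\<forall>x. 0 \<le> N x) \<and> (\<forall>x. N x = 0 \<longleftrightarrow> x = 0) \<and>
     (\<forall>x y. N (x * y) = N x * N y) \<and> (\<forall>x y. N (x + y) \<le> max (N x) (N y)) \<and>
     N (of_nat p) = 1 / real p \<and>
     (\<forall>X::nat \<Rightarrow> 'a. (\<forall>e>0. \<exists>M. \<forall>m\<ge>M. \<forall>n\<ge>M. N (X m - X n) < e) \<longrightarrow>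
        (\<exists>L. \<forall>e>0. \<exists>M. \<forall>n\<ge>M. N (X n - L) < e)) \<and>
     (\<forall>P::'a poly. 0 < degree P \<longrightarrow> (\<exists>z. poly P z = 0))"

definition qint :: "'a::field \<Rightarrow> nat \<Rightarrow> 'a" where
  "qint q x = (1 - q ^ x) / (1 - q)"

definition qfact :: "'a::field \<Rightarrow> nat \<Rightarrow> 'a" where
  "qfact q n = (\<Prod>i=1..n. qint q i)"

definition qbinom :: "'a::field \<Rightarrow> nat \<Rightarrow> nat \<Rightarrow> 'a" where
  "qbinom q k l = qfact q k / (qfact q l * qfact q (k - l))"

definition qEuler :: "'a::field \<Rightarrow> nat \<Rightarrow> 'a" where
  "qEuler q n = 2 / (1 - q) ^ n *
     (\<Sum>l\<le>n. of_nat (n choose l) * (-1) ^ l * (1 / (1 + q ^ l)))"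

text \<open>q-Stirling numbers of the second kind: the coefficients in
  y^n = sum_{k<=n} q^(k choose 2) s(n,k) prod_{i<k} q^(-i) (y - [i]_q)
  as polynomials in y = [x]_q.\<close>
definition qStirling2 :: "'a::field \<Rightarrow> nat \<Rightarrow> nat \<Rightarrow> 'a" where
  "qStirling2 q n = (THE c. (\<forall>k>n. c k = 0) \<and>
      monom 1 n = (\<Sum>k\<le>n. smult (q ^ (k choose 2) * c k)
                     (\<Prod>i<k. smult (inverse q ^ i) [:- qint q i, 1:])))"

end

theory Submission
  imports Defs "HOL-Computational_Algebra.Primes"
begin

text \<open>Both sides of the identity are the images of \<open>y\<^sup>n\<close> under the linear functional
  \<open>y\<^sup>m \<mapsto> E\<^sub>m\<^sub>,\<^sub>q\<close> on polynomials in \<open>y = [x]\<^sub>q\<close>, so the identity holds for every sequence in place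
  of the \<open>q\<close>-Euler numbers. Expand \<open>y\<^sup>n\<close> in \<open>q\<close>-falling factorials (this is the definition of the
  \<open>q\<close>-Stirling numbers), write the \<open>k\<close>-th one as \<open>(1 - q)\<^sup>-\<^sup>k \<Prod>\<^sub>i\<^sub><\<^sub>k (1 - q\<^sup>-\<^sup>i q\<^sup>x)\<close> with
  \<open>q\<^sup>x = 1 + (q - 1) y\<close>, expand the product by the \<open>q\<close>-binomial theorem and the powers of
  \<open>1 + (q - 1) y\<close> by the binomial theorem.

  The \<open>p\<close>-adic hypothesis (for any prime \<open>p\<close>, odd or not) only serves to show that \<open>q\<close> is not a root of unity, so that all
  \<open>[i]\<^sub>q\<close> are nonzero and the quotients of \<open>q\<close>-factorials are the Gaussian binomial
  coefficients: a root of unity \<open>w \<noteq> 1\<close> of order prime to \<open>p\<close> has \<open>|1 - w| = 1\<close>, and one of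
  order \<open>p\<close> has \<open>|1 - w|\<^sup>p\<^sup>-\<^sup>1 \<ge> 1/p\<close>.\<close>

locale nonarch_abs =
  fixes N :: "'a::field \<Rightarrow> real"
  assumes N_nonneg: "0 \<le> N x"
    and N_eq_0_iff: "N x = 0 \<longleftrightarrow> x = 0"
    and N_mult: "N (x * y) = N x * N y"
    and N_add_le_max: "N (x + y) \<le> max (N x) (N y)"
begin

lemma N_0 [simp]: "N 0 = 0"
  by (simp add: N_eq_0_iff)

lemma N_1 [simp]: "N 1 = 1"
proof -
  have "N 1 = N 1 * N 1" using N_mult[of 1 1] by simp
  moreover have "N 1 \<noteq> 0" using N_eq_0_iff[of 1] by simp
  ultimately show ?thesis by (metis mult_cancel_left1)
qed

lemma N_minus [simp]: "N (- x) = N x"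
proof -
  have "(N (-1) - 1) * (N (-1) + 1) = 0"
    using N_mult[of "-1" "-1"] by (simp add: algebra_simps)
  moreover have "N (-1) + 1 > 0" using N_nonneg[of "-1"] by simp
  ultimately have "N (-1) = 1" by simp
  thus ?thesis using N_mult[of "-1" x] by simp
qed

lemma N_diff_le_max: "N (x - y) \<le> max (N x) (N y)"
  using N_add_le_max[of x "- y"] by simp

lemma N_power: "N (x ^ j) = N x ^ j"
  by (induction j) (simp_all add: N_mult)

lemma N_of_nat_le_1: "N (of_nat m) \<le> 1"
proof (induction m)
  case (Suc m)
  thus ?case using N_add_le_max[of 1 "of_nat m"] by simp
qed simp

lemma N_sum_le:
  assumes "0 \<le> B" "\<And>i. i \<in> A \<Longrightarrow> N (f i) \<le> B"
  shows "N (sum f A) \<le> B"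
  using assms(2)
proof (induction A rule: infinite_finite_induct)
  case (insert x F)
  have "max (N (f x)) (N (sum f F)) \<le> B"
    using insert.IH insert.prems by simp
  thus ?case using insert(1,2) N_add_le_max[of "f x" "sum f F"] by (metis order_trans sum.insert)
qed (use assms(1) in simp_all)

lemma N_sum_less:
  assumes "0 < B" "\<And>i. i \<in> A \<Longrightarrow> N (f i) < B"
  shows "N (sum f A) < B"
  using assms(2)
proof (induction A rule: infinite_finite_induct)
  case (insert x F)
  have "max (N (f x)) (N (sum f F)) < B"
    using insert.IH insert.prems by simp
  thus ?case using insert(1,2) N_add_le_max[of "f x" "sum f F"] by (metis le_less_trans sum.insert)
qed (use assms(1) in simp_all)

lemma N_le_1_if_N_one_minus_less_1: "N (1 - x) < 1 \<Longrightarrow> N x \<le> 1"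
  using N_diff_le_max[of 1 "1 - x"] by simp

lemma N_one_minus_power_le:
  assumes "N x \<le> 1"
  shows "N (1 - x ^ j) \<le> N (1 - x)"
proof -
  have "1 - x ^ j = (1 - x) * (\<Sum>i<j. x ^ i)"
    using power_diff_1_eq[of x j] by (simp add: algebra_simps)
  moreover have "N (\<Sum>i<j. x ^ i) \<le> 1"
    by (rule N_sum_le) (simp_all add: N_power assms power_le_one N_nonneg)
  ultimately show ?thesis
    by (simp add: N_mult N_nonneg mult_left_le)
qed

end

lemma binomial_one_minus_eq_1:
  fixes u :: "'a::comm_ring_1"
  assumes "(1 - u) ^ p = 1" "1 \<le> p"
  shows "of_nat p * u = (\<Sum>k=2..p. of_nat (p choose k) * (- u) ^ k)"
proof -
  have "(1 - u) ^ p = (\<Sum>k=0..p. of_nat (p choose k) * (- u) ^ k)"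
    using binomial_ring[of "- u" 1 p] by (simp add: atMost_atLeast0)
  also have "\<dots> = 1 - of_nat p * u + (\<Sum>k=2..p. of_nat (p choose k) * (- u) ^ k)"
    using assms(2) by (simp add: sum.atLeast_Suc_atMost numeral_2_eq_2)
  finally show ?thesis using assms(1) by (simp add: algebra_simps)
qed

lemma powr_neg_inverse_power:
  assumes "1 < n"
  shows "(real n powr (- 1 / (real n - 1))) ^ (n - 1) = 1 / real n"
proof -
  have "(real n powr (- 1 / (real n - 1))) ^ (n - 1) = real n powr (- 1 / (real n - 1) * real (n - 1))"
    using assms by (simp add: powr_realpow[symmetric] powr_powr)
  also have "- 1 / (real n - 1) * real (n - 1) = - 1"
    using assms by (simp add: of_nat_diff)
  finally show ?thesis using assms by (simp add: powr_neg_one)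
qed

locale padic_abs = nonarch_abs N for N :: "'a::field \<Rightarrow> real" +
  fixes p :: nat
  assumes prime_p: "prime p"
    and N_of_nat_p: "N (of_nat p) = 1 / real p"
begin

lemma p_gt_1: "1 < real p"
  using prime_gt_1_nat[OF prime_p] by simp

lemma inverse_p_less_1: "1 / real p < 1"
  using p_gt_1 by simp

lemma N_of_nat_dvd_p:
  assumes "p dvd m"
  shows "N (of_nat m) \<le> 1 / real p"
proof -
  obtain k where "m = p * k" using assms by blast
  hence "N (of_nat m) = N (of_nat k) / real p"
    by (simp add: N_mult N_of_nat_p)
  thus ?thesis using N_of_nat_le_1[of k] p_gt_1 by (simp add: divide_right_mono)
qed

lemma N_of_nat_not_dvd_p:
  assumes "\<not> p dvd e"
  shows "N (of_nat e) = 1"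
proof -
  have "e \<noteq> 0" using assms by (metis dvd_0_right)
  moreover have "coprime e p"
    using assms prime_imp_coprime[OF prime_p] by (simp add: coprime_commute)
  ultimately obtain x y where "e * x = p * y + 1" using bezout_nat[of e p] by auto
  hence "of_nat e * of_nat x = of_nat (p * y) + (1::'a)"
    by (simp flip: of_nat_mult)
  hence "1 \<le> max (N (of_nat e * of_nat x)) (N (of_nat (p * y)))"
    using N_diff_le_max[of "of_nat e * of_nat x" "of_nat (p * y)"] by simp
  moreover have "N (of_nat e * of_nat x) \<le> N (of_nat e)"
    using N_of_nat_le_1[of x] N_nonneg[of "of_nat e"] by (simp add: N_mult mult_left_le)
  moreover have "N (of_nat (p * y)) < 1"
    using N_of_nat_dvd_p[of "p * y"] inverse_p_less_1 by (simp del: of_nat_mult)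
  ultimately show ?thesis using N_of_nat_le_1[of e] by linarith
qed

text \<open>If \<open>w\<close> is a nontrivial root of unity of order prime to \<open>p\<close>, then
  \<open>1 + w + \<dots> + w\<^sup>e\<^sup>-\<^sup>1 = 0\<close> writes the unit \<open>e\<close> as a sum of the small numbers \<open>1 - w\<^sup>i\<close>.\<close>
lemma root_of_unity_prime_to_p_eq_1:
  assumes "\<not> p dvd e" "w ^ e = 1" "N (1 - w) < 1"
  shows "w = 1"
proof (rule ccontr)
  assume "w \<noteq> 1"
  moreover have "(w - 1) * (\<Sum>i<e. w ^ i) = 0"
    using power_diff_1_eq[of w e] assms(2) by simp
  ultimately have "(\<Sum>i<e. 1 - w ^ i) = of_nat e"
    by (simp add: sum_subtractf)
  moreover have "N (\<Sum>i<e. 1 - w ^ i) < 1"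
    using N_one_minus_power_le[OF N_le_1_if_N_one_minus_less_1] assms(3)
    by (intro N_sum_less) (auto intro: le_less_trans)
  ultimately show False using N_of_nat_not_dvd_p[OF assms(1)] by simp
qed

lemma N_binomial_term_less:
  assumes "0 < N u" "N u < 1" "N u ^ (p - 1) < 1 / real p" "k \<in> {2..p}"
  shows "N (of_nat (p choose k) * (- u) ^ k) < N u / real p"
proof (cases "k = p")
  case True
  have "N u ^ p = N u * N u ^ (p - 1)"
    using prime_gt_0_nat[OF prime_p] by (simp flip: power_Suc)
  also have "\<dots> < N u / real p"
    using mult_strict_left_mono[OF assms(3,1)] by simp
  finally show ?thesis using True by (simp add: N_mult N_power)
next
  case False
  with assms(4) have "p dvd (p choose k)"
    using dvd_choose_prime[OF _ _ _ prime_p] by auto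
  hence "N (of_nat (p choose k)) * N u ^ k \<le> N u ^ k / real p"
    using N_of_nat_dvd_p[of "p choose k"] assms(1) mult_right_mono by fastforce
  also have "\<dots> < N u / real p"
    using power_strict_decreasing_iff[OF assms(1,2), of k 1] assms(4) p_gt_1
    by (simp add: divide_strict_right_mono)
  finally show ?thesis by (simp add: N_mult N_power)
qed

text \<open>A nontrivial \<open>p\<close>-th root of unity \<open>w = 1 - u\<close> satisfies
  \<open>p u = \<Sum>\<^sub>k\<^sub>\<ge>\<^sub>2 (p choose k) (-u)\<^sup>k\<close>; if \<open>|u|\<^sup>p\<^sup>-\<^sup>1 < 1/p\<close>, every term on the right is smaller than the left side.\<close>
lemma root_of_unity_N_lower_bound:
  assumes "w ^ p = 1" "w \<noteq> 1"
  shows "1 / real p \<le> N (1 - w) ^ (p - 1)"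
proof (rule ccontr)
  define u where "u = 1 - w"
  assume "\<not> ?thesis"
  hence small: "N u ^ (p - 1) < 1 / real p" unfolding u_def by simp
  have p1: "1 \<le> p - 1" using prime_ge_2_nat[OF prime_p] by simp
  have pos: "0 < N u"
    using assms(2) N_nonneg[of u] N_eq_0_iff[of u] unfolding u_def by auto
  have lt1: "N u < 1"
  proof (rule ccontr)
    assume "\<not> N u < 1"
    hence "1 \<le> N u ^ (p - 1)" by simp
    thus False using small inverse_p_less_1 by simp
  qed
  have "of_nat p * u = (\<Sum>k=2..p. of_nat (p choose k) * (- u) ^ k)"
    using assms(1) p1 by (intro binomial_one_minus_eq_1) (auto simp: u_def)
  moreover have "N (\<Sum>k=2..p. of_nat (p choose k) * (- u) ^ k) < N u / real p"
    using pos p_gt_1 N_binomial_term_less[OF pos lt1 small] by (intro N_sum_less) auto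
  moreover have "N (of_nat p * u) = N u / real p" by (simp add: N_mult N_of_nat_p)
  ultimately show False by (metis less_irrefl)
qed

lemma root_of_unity_near_1_eq_1:
  assumes near: "N (1 - w) < r" and r: "r ^ (p - 1) = 1 / real p" "0 \<le> r"
    and "0 < i" "w ^ i = 1"
  shows "w = 1"
proof -
  have p1: "0 < p - 1" using prime_ge_2_nat[OF prime_p] by simp
  have "r \<le> 1"
    using r inverse_p_less_1 power_le_one_iff[OF r(2), of "p - 1"] p1 by simp
  hence near1: "N (1 - w) < 1" using near by simp
  show ?thesis
    using assms(4,5)
  proof (induction i rule: less_induct)
    case (less i)
    show ?case
    proof (cases "p dvd i")
      case False
      thus ?thesis using root_of_unity_prime_to_p_eq_1 less.prems(2) near1 by blast
    next
      case True
      then obtain j where j: "i = p * j" by blast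
      have "0 < j" "j < i" using j less.prems(1) p_gt_1 by auto
      have "N (1 - w ^ j) < r"
        using N_one_minus_power_le[OF N_le_1_if_N_one_minus_less_1[OF near1], of j] near
        by simp
      hence "N (1 - w ^ j) ^ (p - 1) < 1 / real p"
        using power_strict_mono[OF _ N_nonneg p1] r(1) by metis
      moreover have "(w ^ j) ^ p = 1"
        using less.prems(2) j by (simp add: power_mult[symmetric] mult.commute)
      ultimately have "w ^ j = 1" using root_of_unity_N_lower_bound by fastforce
      thus ?thesis using less.IH[OF \<open>j < i\<close> \<open>0 < j\<close>] by simp
    qed
  qed
qed

end

lemma sum_smult_graded_basis_eq_0:
  fixes B :: "nat \<Rightarrow> 'a::idom poly"
  assumes deg: "\<And>k. degree (B k) = k" and nz: "\<And>k. B k \<noteq> 0"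
    and zero: "(\<Sum>k\<le>n. smult (c k) (B k)) = 0" and "k \<le> n"
  shows "c k = 0"
  using zero assms(4)
proof (induction n arbitrary: k)
  case 0
  thus ?case using nz[of 0] by simp
next
  case (Suc n)
  have "coeff (\<Sum>k\<le>n. smult (c k) (B k)) (Suc n) = 0"
    unfolding coeff_sum by (intro sum.neutral) (auto intro!: coeff_eq_0 simp: deg)
  hence "c (Suc n) * lead_coeff (B (Suc n)) = 0"
    using arg_cong[OF Suc.prems(1), of "\<lambda>f. coeff f (Suc n)"] by (simp add: deg)
  hence c: "c (Suc n) = 0" using nz[of "Suc n"] by simp
  hence "(\<Sum>k\<le>n. smult (c k) (B k)) = 0" using Suc.prems(1) by simp
  thus ?case using Suc.IH c Suc.prems(2) le_Suc_eq by blast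
qed

lemma graded_basis_expansion:
  fixes B :: "nat \<Rightarrow> 'a::field poly"
  assumes deg: "\<And>k. degree (B k) = k" and nz: "\<And>k. B k \<noteq> 0" and "degree f \<le> n"
  shows "\<exists>c. f = (\<Sum>k\<le>n. smult (c k) (B k))"
  using assms(3)
proof (induction n arbitrary: f)
  case 0
  then obtain a where "f = [:a:]" by (metis degree_eq_zeroE le_zero_eq)
  moreover obtain b where "B 0 = [:b:]" "b \<noteq> 0"
    using deg[of 0] nz[of 0] by (metis degree_eq_zeroE pCons_0_0)
  ultimately have "f = (\<Sum>k\<le>0. smult (a / b) (B k))" by simp
  thus ?case by (intro exI[of _ "\<lambda>_. a / b"])
next
  case (Suc n)
  define a where "a = coeff f (Suc n) / lead_coeff (B (Suc n))"
  have lead: "coeff (B (Suc n)) (Suc n) \<noteq> 0"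
    using nz[of "Suc n"] deg[of "Suc n"] leading_coeff_0_iff by metis
  have "degree (f - smult a (B (Suc n))) \<le> n"
  proof (rule degree_le, intro allI impI)
    fix i assume "n < i"
    thus "coeff (f - smult a (B (Suc n))) i = 0"
      using Suc.prems deg[of "Suc n"] lead
      by (cases "i = Suc n") (auto simp: a_def coeff_eq_0)
  qed
  then obtain c where c: "f - smult a (B (Suc n)) = (\<Sum>k\<le>n. smult (c k) (B k))"
    using Suc.IH by blast
  have "f = (\<Sum>k\<le>Suc n. smult ((c(Suc n := a)) k) (B k))"
    using c by (simp add: algebra_simps)
  thus ?case by blast
qed

text \<open>The product \<open>[x]\<^sub>q [x - 1]\<^sub>q \<dots> [x - k + 1]\<^sub>q\<close> as a polynomial in \<open>y = [x]\<^sub>q\<close>, via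
  \<open>[x - i]\<^sub>q = q\<^sup>-\<^sup>i (y - [i]\<^sub>q)\<close>.\<close>
definition qfalling_poly :: "'a::field \<Rightarrow> nat \<Rightarrow> 'a poly" where
  "qfalling_poly q k = (\<Prod>i<k. smult (inverse q ^ i) [:- qint q i, 1:])"

lemma degree_qfalling_poly: "q \<noteq> 0 \<Longrightarrow> degree (qfalling_poly q k) = k"
  unfolding qfalling_poly_def by (subst degree_prod_eq_sum_degree) auto

lemma qfalling_poly_nonzero: "q \<noteq> 0 \<Longrightarrow> qfalling_poly q k \<noteq> 0"
  unfolding qfalling_poly_def by auto

lemma monom_eq_sum_qStirling2:
  fixes q :: "'a::field"
  assumes "q \<noteq> 0"
  shows "monom 1 n = (\<Sum>k\<le>n. smult (q ^ (k choose 2) * qStirling2 q n k) (qfalling_poly q k))"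
proof -
  let ?P = "\<lambda>c. (\<forall>k>n. c k = 0) \<and>
      monom 1 n = (\<Sum>k\<le>n. smult (q ^ (k choose 2) * c k) (qfalling_poly q k))"
  note basis = degree_qfalling_poly[OF assms] qfalling_poly_nonzero[OF assms]
  obtain d where d: "monom 1 n = (\<Sum>k\<le>n. smult (d k) (qfalling_poly q k))"
    using graded_basis_expansion[OF basis] degree_monom_le by blast
  define c\<^sub>0 where "c\<^sub>0 k = (if k \<le> n then d k / q ^ (k choose 2) else 0)" for k
  have ex: "?P c\<^sub>0"
    using d assms by (auto simp: c\<^sub>0_def intro!: sum.cong)
  have unique: "c = c'" if "?P c" "?P c'" for c c'
  proof
    fix k
    have "(\<Sum>k\<le>n. smult (q ^ (k choose 2) * (c k - c' k)) (qfalling_poly q k)) = 0"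
      unfolding right_diff_distrib smult_diff_left sum_subtractf using that by simp
    from sum_smult_graded_basis_eq_0[OF basis this]
    have "k \<le> n \<Longrightarrow> q ^ (k choose 2) * (c k - c' k) = 0" .
    thus "c k = c' k" using that assms by (cases "k \<le> n") auto
  qed
  have "?P (THE c. ?P c)" by (rule theI[of ?P, OF ex unique[OF _ ex]])
  moreover have "qStirling2 q n = (THE c. ?P c)"
    unfolding qStirling2_def qfalling_poly_def ..
  ultimately show ?thesis by simp
qed

lemma qint_add: "qint q (a + b) = qint q a + q ^ a * qint q b"
proof -
  have "1 - q ^ (a + b) = (1 - q ^ a) + q ^ a * (1 - q ^ b)"
    by (simp add: power_add algebra_simps)
  thus ?thesis unfolding qint_def by (metis add_divide_distrib times_divide_eq_right)
qed

lemma qfact_Suc: "qfact q (Suc n) = qfact q n * qint q (Suc n)"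
  unfolding qfact_def by (simp add: prod.nat_ivl_Suc')

lemma qfact_nonzero: "(\<And>i. 0 < i \<Longrightarrow> i \<le> k \<Longrightarrow> qint q i \<noteq> 0) \<Longrightarrow> qfact q k \<noteq> 0"
  unfolding qfact_def by auto

lemma qbinom_Suc_Suc:
  fixes q :: "'a::field"
  assumes nz: "\<And>i. 0 < i \<Longrightarrow> i \<le> Suc k \<Longrightarrow> qint q i \<noteq> 0" and "j < k"
  shows "qbinom q (Suc k) (Suc j) = q ^ Suc j * qbinom q k (Suc j) + qbinom q k j"
proof -
  have k_j: "k - j = Suc (k - Suc j)" using \<open>j < k\<close> by simp
  have nonzero: "qfact q j \<noteq> 0" "qfact q (k - Suc j) \<noteq> 0"
    "qint q (Suc j) \<noteq> 0" "qint q (k - j) \<noteq> 0"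
    using \<open>j < k\<close> nz by (auto intro!: qfact_nonzero)
  have "qint q (Suc k) = qint q (Suc j) + q ^ Suc j * qint q (k - j)"
    using qint_add[of q "Suc j" "k - j"] \<open>j < k\<close> by simp
  thus ?thesis
    using nonzero unfolding qbinom_def k_j diff_Suc_Suc qfact_Suc
    by (simp add: field_simps)
qed

text \<open>Division-free Gaussian binomial coefficients, defined by the \<open>q\<close>-Pascal recursion;
  unlike \<open>qbinom\<close> they vanish for \<open>l > k\<close> and need no hypothesis on \<open>q\<close>.\<close>
fun gauss_binom :: "'a::field \<Rightarrow> nat \<Rightarrow> nat \<Rightarrow> 'a" where
  "gauss_binom q 0 l = (if l = 0 then 1 else 0)"
| "gauss_binom q (Suc k) l =
     (if l = 0 then 1 else q ^ l * gauss_binom q k l + gauss_binom q k (l - 1))"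

lemma gauss_binom_0_right [simp]: "gauss_binom q k 0 = 1"
  by (cases k) auto

lemma gauss_binom_eq_0: "k < l \<Longrightarrow> gauss_binom q k l = 0"
  by (induction k arbitrary: l) auto

lemma gauss_binom_eq_qbinom:
  assumes nz: "\<And>i. 0 < i \<Longrightarrow> i \<le> k \<Longrightarrow> qint q i \<noteq> 0" and "l \<le> k"
  shows "gauss_binom q k l = qbinom q k l"
  using assms
proof (induction k arbitrary: l)
  case 0
  thus ?case by (simp add: qbinom_def qfact_def)
next
  case (Suc k)
  have fact_nz: "qfact q m \<noteq> 0" if "m \<le> Suc k" for m
    using Suc.prems(1) that by (intro qfact_nonzero) auto
  consider "l = 0" | "l = Suc k" | j where "l = Suc j" "j < k"
    using Suc.prems(2) by (cases l) (auto simp: le_less)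
  thus ?case
  proof cases
    case 1
    thus ?thesis using fact_nz[of "Suc k"] by (simp add: qbinom_def qfact_def)
  next
    case 2
    thus ?thesis
      using Suc.IH[of k] Suc.prems(1) fact_nz[of k] fact_nz[of "Suc k"] gauss_binom_eq_0[of k "Suc k" q]
      by (simp add: qbinom_def qfact_def)
  next
    case 3
    thus ?thesis
      using Suc.IH[of j] Suc.IH[of "Suc j"] Suc.prems(1) qbinom_Suc_Suc[OF Suc.prems(1)]
      by simp
  qed
qed

definition gauss_poly :: "'a::field \<Rightarrow> nat \<Rightarrow> 'a poly" where
  "gauss_poly q k = (\<Prod>i<k. [:1, - (inverse q ^ i):])"

lemma degree_gauss_poly_le: "degree (gauss_poly q k) \<le> k"
proof -
  have "degree (gauss_poly q k) \<le> (\<Sum>i<k. degree [:1, - (inverse q ^ i):])"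
    unfolding gauss_poly_def
    using degree_prod_sum_le[of "{..<k}" "\<lambda>i. [:1, - (inverse q ^ i):]"]
    by (simp only: o_def finite_lessThan simp_thms)
  also have "\<dots> \<le> (\<Sum>i<k. 1)" by (intro sum_mono) simp
  finally show ?thesis by simp
qed

lemma coeff_gauss_poly:
  fixes q :: "'a::field"
  assumes "q \<noteq> 0"
  shows "coeff (gauss_poly q k) l * q ^ (l * k) = (-1) ^ l * gauss_binom q k l * q ^ ((l choose 2) + l)"
proof (induction k arbitrary: l)
  case 0
  thus ?case by (simp add: gauss_poly_def binomial_eq_0)
next
  case (Suc k)
  have step: "gauss_poly q (Suc k) = [:1, - (inverse q ^ k):] * gauss_poly q k"
    unfolding gauss_poly_def by simp
  show ?case
  proof (cases l)
    case 0
    thus ?thesis using Suc.IH[of 0] by (simp add: step binomial_eq_0)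
  next
    case (Suc j)
    have "coeff (gauss_poly q (Suc k)) (Suc j) * q ^ (Suc j * Suc k)
        = coeff (gauss_poly q k) (Suc j) * q ^ (Suc j * k) * q ^ Suc j
          - coeff (gauss_poly q k) j * q ^ (j * k) * q ^ Suc j"
      using assms by (simp add: step algebra_simps power_add power_mult_distrib power_inverse)
    also have "\<dots> = (-1) ^ Suc j * (q ^ Suc j * gauss_binom q k (Suc j) + gauss_binom q k j)
        * q ^ ((Suc j choose 2) + Suc j)"
      unfolding Suc.IH by (simp add: algebra_simps power_add numeral_2_eq_2)
    finally show ?thesis using Suc by simp
  qed
qed

lemma sum_atMost_atLeastAtMost_swap:
  "(\<Sum>m\<le>(k::nat). \<Sum>l=m..k. f m l) = (\<Sum>l\<le>k. \<Sum>m\<le>l. f m l)"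
proof (induction k)
  case (Suc k)
  have "(\<Sum>m\<le>Suc k. \<Sum>l=m..Suc k. f m l) = (\<Sum>m\<le>Suc k. (\<Sum>l=m..k. f m l) + f m (Suc k))"
    by (intro sum.cong) auto
  thus ?case using Suc.IH by (simp add: sum.distrib)
qed simp

lemma poly_eq_sum_coeff:
  fixes p :: "'a::comm_semiring_1 poly"
  assumes "degree p \<le> d"
  shows "poly p x = (\<Sum>i\<le>d. coeff p i * x ^ i)"
proof -
  have "poly p x = poly (\<Sum>i\<le>d. monom (coeff p i) i) x"
    by (simp add: poly_as_sum_of_monoms'[OF assms])
  thus ?thesis by (simp add: poly_sum poly_monom)
qed

lemma pcompose_eq_sum:
  fixes p :: "'a::{idom,ring_char_0} poly"
  assumes "degree p \<le> d"
  shows "pcompose p r = (\<Sum>i\<le>d. smult (coeff p i) (r ^ i))"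
  by (rule poly_ext) (simp add: poly_pcompose poly_eq_sum_coeff[OF assms] poly_sum)

lemma linear_poly_power:
  fixes c :: "'a::{idom,ring_char_0}"
  shows "[:1, c:] ^ l = (\<Sum>m\<le>l. smult (of_nat (l choose m) * c ^ m) (monom 1 m))"
proof (rule poly_ext)
  fix y
  have "poly ([:1, c:] ^ l) y = (c * y + 1) ^ l" by (simp add: algebra_simps)
  also have "\<dots> = (\<Sum>m\<le>l. of_nat (l choose m) * (c * y) ^ m)"
    by (simp add: binomial_ring)
  finally show "poly ([:1, c:] ^ l) y = poly (\<Sum>m\<le>l. smult (of_nat (l choose m) * c ^ m) (monom 1 m)) y"
    by (simp add: poly_sum poly_monom power_mult_distrib mult.assoc)
qed

text \<open>At \<open>y = [x]\<^sub>q\<close> the linear polynomial \<open>1 + (q - 1) y\<close> takes the value \<open>q\<^sup>x\<close>, and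
  \<open>q\<^sup>-\<^sup>i (y - [i]\<^sub>q) = (1 - q\<^sup>-\<^sup>i q\<^sup>x) / (1 - q)\<close>.\<close>
lemma qfalling_poly_eq_pcompose:
  fixes q :: "'a::field_char_0"
  assumes "q \<noteq> 0" "q \<noteq> 1"
  shows "qfalling_poly q k = smult (inverse (1 - q) ^ k) (pcompose (gauss_poly q k) [:1, q - 1:])"
proof (rule poly_ext)
  fix y
  have factor: "inverse q ^ i * (y - qint q i) = inverse (1 - q) * (1 - inverse q ^ i * (1 + (q - 1) * y))" for i
    using assms unfolding qint_def by (simp add: field_simps power_inverse)
  have "poly (qfalling_poly q k) y = (\<Prod>i<k. inverse q ^ i * (y - qint q i))"
    unfolding qfalling_poly_def poly_prod by (simp add: algebra_simps)
  also have "\<dots> = (\<Prod>i<k. inverse (1 - q) * (1 - inverse q ^ i * (1 + (q - 1) * y)))"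
    by (simp only: factor)
  also have "\<dots> = inverse (1 - q) ^ k * poly (gauss_poly q k) (1 + (q - 1) * y)"
    unfolding gauss_poly_def poly_prod by (simp add: prod.distrib mult_ac)
  finally show "poly (qfalling_poly q k) y = poly (smult (inverse (1 - q) ^ k) (pcompose (gauss_poly q k) [:1, q - 1:])) y"
    by (simp add: poly_pcompose mult.commute)
qed

lemma coeff_gauss_poly_eq_qbinom:
  fixes q :: "'a::field"
  assumes "q \<noteq> 0" "\<And>i. 0 < i \<Longrightarrow> i \<le> k \<Longrightarrow> qint q i \<noteq> 0" "l \<le> k"
  shows "coeff (gauss_poly q k) l = (-1) ^ l * qbinom q k l * q powi (int (l choose 2) + int l * (1 - int k))"
proof -
  have e: "int (l choose 2) + int l * (1 - int k) = int ((l choose 2) + l) - int (l * k)"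
    by (simp add: algebra_simps)
  have "q powi (int (l choose 2) + int l * (1 - int k)) = q ^ ((l choose 2) + l) / q ^ (l * k)"
    unfolding e by (simp only: power_int_diff[OF disjI1[OF assms(1)]] power_int_of_nat)
  moreover have "coeff (gauss_poly q k) l = (-1) ^ l * gauss_binom q k l * q ^ ((l choose 2) + l) / q ^ (l * k)"
    using coeff_gauss_poly[OF assms(1), of k l] assms(1) by (simp add: eq_divide_eq)
  ultimately show ?thesis using gauss_binom_eq_qbinom[OF assms(2,3)] by simp
qed

definition umbral_eval :: "nat \<Rightarrow> (nat \<Rightarrow> 'a::comm_semiring_1) \<Rightarrow> 'a poly \<Rightarrow> 'a" where
  "umbral_eval n E f = (\<Sum>j\<le>n. coeff f j * E j)"

lemma umbral_eval_smult: "umbral_eval n E (smult c f) = c * umbral_eval n E f"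
  unfolding umbral_eval_def by (simp add: sum_distrib_left mult.assoc)

lemma umbral_eval_sum: "umbral_eval n E (sum F A) = (\<Sum>a\<in>A. umbral_eval n E (F a))"
  unfolding umbral_eval_def coeff_sum by (simp add: sum_distrib_right sum.swap[of _ A])

lemma umbral_eval_monom:
  assumes "m \<le> n"
  shows "umbral_eval n E (monom 1 m) = E m"
proof -
  have "umbral_eval n E (monom 1 m) = (\<Sum>j\<le>n. if j = m then E j else 0)"
    unfolding umbral_eval_def by (intro sum.cong) (auto simp: coeff_monom)
  thus ?thesis using assms by simp
qed

lemma umbral_eval_linear_poly_power:
  fixes c :: "'a::{idom,ring_char_0}"
  assumes "l \<le> n"
  shows "umbral_eval n E ([:1, c:] ^ l) = (\<Sum>m\<le>l. of_nat (l choose m) * c ^ m * E m)"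
  unfolding linear_poly_power umbral_eval_sum umbral_eval_smult
  using assms by (intro sum.cong) (auto simp: umbral_eval_monom)

lemma inverse_one_minus_power_mult:
  fixes q :: "'a::field"
  assumes "q \<noteq> 1"
  shows "inverse (1 - q) ^ k * (q - 1) ^ m = (-1) ^ k * (q - 1) powi (int m - int k)"
proof -
  have "inverse (1 - q) ^ k = (-1) ^ k / (q - 1) ^ k"
    by (metis inverse_minus_eq minus_diff_eq power_inverse power_minus divide_inverse)
  moreover have "(q - 1) powi (int m - int k) = (q - 1) ^ m / (q - 1) ^ k"
    using assms by (simp add: power_int_diff)
  ultimately show ?thesis by simp
qed

lemma umbral_eval_qfalling_poly:
  fixes q :: "'a::field_char_0"
  assumes "q \<noteq> 0" "q \<noteq> 1" "\<And>i. 0 < i \<Longrightarrow> i \<le> k \<Longrightarrow> qint q i \<noteq> 0" "k \<le> n"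
  shows "umbral_eval n E (qfalling_poly q k) =
    (\<Sum>m\<le>k. \<Sum>l=m..k. (q - 1) powi (int m - int k) * qbinom q k l *
       q powi (int (l choose 2) + int l * (1 - int k)) * of_nat (l choose m) * (-1) ^ (l + k) * E m)"
proof -
  define c where "c l = (-1) ^ l * qbinom q k l * q powi (int (l choose 2) + int l * (1 - int k))" for l
  have "umbral_eval n E (qfalling_poly q k) =
      inverse (1 - q) ^ k * (\<Sum>l\<le>k. c l * (\<Sum>m\<le>l. of_nat (l choose m) * (q - 1) ^ m * E m))"
    unfolding qfalling_poly_eq_pcompose[OF assms(1,2)] pcompose_eq_sum[OF degree_gauss_poly_le]
      umbral_eval_smult umbral_eval_sum c_def
    using assms by (intro arg_cong[where f="(*) _"] sum.cong)
      (auto simp: umbral_eval_linear_poly_power coeff_gauss_poly_eq_qbinom)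
  also have "\<dots> = (\<Sum>l\<le>k. \<Sum>m\<le>l. (inverse (1 - q) ^ k * (q - 1) ^ m) * (c l * of_nat (l choose m) * E m))"
    by (simp add: sum_distrib_left mult_ac)
  also have "\<dots> = (\<Sum>l\<le>k. \<Sum>m\<le>l. (q - 1) powi (int m - int k) * qbinom q k l *
       q powi (int (l choose 2) + int l * (1 - int k)) * of_nat (l choose m) * (-1) ^ (l + k) * E m)"
    unfolding inverse_one_minus_power_mult[OF assms(2)] c_def by (simp add: power_add mult_ac)
  finally show ?thesis by (simp only: sum_atMost_atLeastAtMost_swap)
qed

lemma umbral_eval_qStirling2_identity:
  fixes q :: "'a::field_char_0"
  assumes "q \<noteq> 0" "\<And>i. 0 < i \<Longrightarrow> q ^ i \<noteq> 1"
  shows "E n =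
    (\<Sum>k\<le>n. \<Sum>m\<le>k. \<Sum>l=m..k.
       q ^ (k choose 2) * qStirling2 q n k * (q - 1) powi (int m - int k) *
       qbinom q k l * q powi (int (l choose 2) + int l * (1 - int k)) *
       of_nat (l choose m) * (-1) ^ (l + k) * E m)"
proof -
  have "q \<noteq> 1" using assms(2)[of 1] by simp
  hence qint_nonzero: "qint q i \<noteq> 0" if "0 < i" for i
    using assms(2)[OF that] by (simp add: qint_def)
  have "E n = umbral_eval n E (monom 1 n)" by (simp add: umbral_eval_monom)
  also have "\<dots> = (\<Sum>k\<le>n. q ^ (k choose 2) * qStirling2 q n k * umbral_eval n E (qfalling_poly q k))"
    by (subst monom_eq_sum_qStirling2[OF assms(1)]) (simp add: umbral_eval_sum umbral_eval_smult)
  also have "\<dots> = (\<Sum>k\<le>n. \<Sum>m\<le>k. \<Sum>l=m..k.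
       q ^ (k choose 2) * qStirling2 q n k * (q - 1) powi (int m - int k) *
       qbinom q k l * q powi (int (l choose 2) + int l * (1 - int k)) *
       of_nat (l choose m) * (-1) ^ (l + k) * E m)"
    using assms(1) \<open>q \<noteq> 1\<close> qint_nonzero
    by (intro sum.cong refl) (simp add: umbral_eval_qfalling_poly sum_distrib_left mult_ac)
  finally show ?thesis .
qed

theorem mainTheorem1:
  fixes p :: nat and N :: "'a::field_char_0 \<Rightarrow> real" and q :: 'a and n :: nat
  assumes "prime p" and "odd p" and "Cp_like p N"
    and "N (1 - q) < real p powr (- 1 / (real p - 1))"
    and "q \<noteq> 1"
  shows "qEuler q n =
    (\<Sum>k\<le>n. \<Sum>m\<le>k. \<Sum>l=m..k.
       q ^ (k choose 2) * qStirling2 q n k * (q - 1) powi (int m - int k) *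
       qbinom q k l * q powi (int (l choose 2) + int l * (1 - int k)) *
       of_nat (l choose m) * (-1) ^ (l + k) * qEuler q m)"
proof -
  interpret padic_abs N p
    using assms(1,3) unfolding Cp_like_def by unfold_locales auto
  define r where "r = real p powr (- 1 / (real p - 1))"
  have r: "r ^ (p - 1) = 1 / real p" "0 \<le> r"
    unfolding r_def using powr_neg_inverse_power prime_gt_1_nat[OF assms(1)] by simp_all
  have "r \<le> 1"
    unfolding r_def using powr_mono[of "- 1 / (real p - 1)" 0 "real p"] p_gt_1 by simp
  hence "q \<noteq> 0" using assms(4) unfolding r_def by auto
  moreover have "q ^ i \<noteq> 1" if "0 < i" for i
    using root_of_unity_near_1_eq_1[OF _ r that] assms(4,5) unfolding r_def by blast
  ultimately show ?thesis by (rule umbral_eval_qStirling2_identity)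
qed

end
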